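(* Let $G$ be an execution graph, $T$ a thread and $q$ an await-iteration index of $T$ in $G$. If $t\in[\mathit{start}_G^T(q):\mathit{end}_G^T(q))$, then $P_T(k_G^T(t))$ is not an $\mathtt{await}$ statement.
   Context: Programs. There are finite sets $\mathit{Register}$, $\mathit{Value}$, $\mathit{Location}$; $\mathit{State}=\mathit{Register}\to\mathit{Value}$; an update is a partial map $\mathit{Register}\rightharpoonup\mathit{Value}$, and $(\sigma\ll\mu)(r)=\mu(r)$ if $r\in\mathrm{Dom}(\mu)$, else $\sigma(r)$. Events are reads $R^m(x)$, writes $W^m(x,v)$, fences $F^m$, error $E$. A program consists of finitely many threads $T$, each with a finite statement sequence $P_T(0),\dots,P_T(|P_T|-1)$. A statement is $\mathtt{step}(\epsilon,\delta)$ with $\epsilon:\mathit{State}\to\mathit{Event}$, $\delta:\mathit{State}\times(\mathit{Value}\cup\{\bot\})\to\mathit{Update}$, or $\mathtt{await}(n,\kappa)$ with $n\in\mathbb N$, $\kappa:\mathit{State}\to\{0,1\}$. Syntactic restriction: if $P_T(k)=\mathtt{await}(n,\cdot)$ then $n\le k$ and no $P_T(k')$ with $k'\in[k-n:k)$ is an await. ($[a:b)=\{a,\dots,b-1\}$.) An execution graph $G$ has a set $G.\mathrm E$ of triples $\langle T,t,e\rangle$ and a partial reads-from map $G.\mathrm{rf}$ from reads to writes. Thread-local semantics: $k_G^T(0)=0$, $\sigma_G^T(0)$ fixed; if $k_G^T(t)\ge|P_T|$ or no triple $\langle T,t,\cdot\rangle$ is in $G.\mathrm E$, execution stops ($N_G^T=t$).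 Otherwise with $S=P_T(k_G^T(t))$: $e_G^T(t)=\epsilon(\sigma_G^T(t))$ for $S=\mathtt{step}(\epsilon,\cdot)$, $F^{\mathrm{rlx}}$ for an await; $v_G^T(t)$ is the value of the write that $G.\mathrm{rf}$ assigns to $\langle T,t,e_G^T(t)\rangle$ if this is a read with defined rf, else $\bot$. For a step: $k_G^T(t+1)=k_G^T(t)+1$; if $e_G^T(t)$ is a read with $v_G^T(t)=\bot$ then $N_G^T=t+1$, $\sigma_G^T(t+1)=\sigma_G^T(t)$, else $\sigma_G^T(t+1)=\sigma_G^T(t)\ll\delta(\sigma_G^T(t),v_G^T(t))$. For $\mathtt{await}(n,\kappa)$: $\sigma_G^T(t+1)=\sigma_G^T(t)$ and $k_G^T(t+1)=k_G^T(t)+1$ if $\kappa(\sigma_G^T(t))=0$, else $k_G^T(t)-n$. Awaits: $\mathit{end}_G^T(0)<\mathit{end}_G^T(1)<\cdots$ enumerate the steps $t$ (with $t<N_G^T$) at which $P_T(k_G^T(t))$ is an await; $\mathit{len}_G^T(q)=n$ where $P_T(k_G^T(\mathit{end}_G^T(q)))=\mathtt{await}(n,\cdot)$; $\mathit{start}_G^T(q)=\mathit{end}_G^T(q)-\mathit{len}_G^T(q)$. *)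

theory Defs
  imports Main
begin

text \<open>Access modes of events (the concrete set of modes is irrelevant here;
  awaits produce relaxed fences).\<close>
datatype mode = Rlx | Acq | Rel | AcqRel | SC

datatype ('l, 'v) event =
    Rd mode 'l
  | Wr mode 'l 'v
  | Fn mode
  | Err

type_synonym ('r, 'v) state = "'r \<Rightarrow> 'v"
type_synonym ('r, 'v) update = "'r \<rightharpoonup> 'v"

definition upd :: "('r, 'v) state \<Rightarrow> ('r, 'v) update \<Rightarrow> ('r, 'v) state" where
  "upd \<sigma> \<mu> = (\<lambda>r. case \<mu> r of Some v \<Rightarrow> v | None \<Rightarrow> \<sigma> r)"

text \<open>Statements: step(\<epsilon>,\<delta>) and await(n,\<kappa>);
  the value argument of \<delta> is 'v option with None playing the role of \<bottom>,
  and \<kappa> returns bool (True = 1, False = 0).\<close>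
datatype ('r, 'l, 'v) stmt =
    Step "('r, 'v) state \<Rightarrow> ('l, 'v) event" "('r, 'v) state \<Rightarrow> 'v option \<Rightarrow> ('r, 'v) update"
  | Await nat "('r, 'v) state \<Rightarrow> bool"

fun is_await :: "('r, 'l, 'v) stmt \<Rightarrow> bool" where
  "is_await (Await _ _) = True"
| "is_await (Step _ _) = False"

fun await_len :: "('r, 'l, 'v) stmt \<Rightarrow> nat" where
  "await_len (Await n _) = n"
| "await_len (Step _ _) = 0"

fun is_read :: "('l, 'v) event \<Rightarrow> bool" where
  "is_read (Rd _ _) = True"
| "is_read _ = False"

fun is_write :: "('l, 'v) event \<Rightarrow> bool" where
  "is_write (Wr _ _ _) = True"
| "is_write _ = False"

fun wval :: "('l, 'v) event \<Rightarrow> 'v option" where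
  "wval (Wr _ _ v) = Some v"
| "wval _ = None"

type_synonym ('t, 'r, 'l, 'v) program = "'t \<Rightarrow> ('r, 'l, 'v) stmt list"

definition wf_program :: "('t, 'r, 'l, 'v) program \<Rightarrow> bool" where
  "wf_program P \<longleftrightarrow> (\<forall>T k. k < length (P T) \<longrightarrow> is_await (P T ! k) \<longrightarrow>
      await_len (P T ! k) \<le> k \<and>
      (\<forall>k'. k - await_len (P T ! k) \<le> k' \<and> k' < k \<longrightarrow> \<not> is_await (P T ! k')))"

type_synonym ('t, 'l, 'v) node = "'t \<times> nat \<times> ('l, 'v) event"

record ('t, 'l, 'v) egraph =
  Ev :: "('t, 'l, 'v) node set"
  rf :: "('t, 'l, 'v) node \<rightharpoonup> ('t, 'l, 'v) node"

fun nevt :: "('t, 'l, 'v) node \<Rightarrow> ('l, 'v) event" where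
  "nevt (_, _, e) = e"

definition wf_graph :: "('t, 'l, 'v) egraph \<Rightarrow> bool" where
  "wf_graph G \<longleftrightarrow> (\<forall>a b. rf G a = Some b \<longrightarrow> is_read (nevt a) \<and> is_write (nevt b))"

definition read_val :: "('t, 'l, 'v) egraph \<Rightarrow> ('t, 'l, 'v) node \<Rightarrow> 'v option" where
  "read_val G a = (if is_read (nevt a) then
      (case rf G a of Some w \<Rightarrow> wval (nevt w) | None \<Rightarrow> None) else None)"

text \<open>cfg P \<sigma>0 G T t = (k_G^T(t), \<sigma>_G^T(t)); computed for all t (stopping
  is handled separately by running).\<close>
primrec cfg :: "('t, 'r, 'l, 'v) program \<Rightarrow> ('t \<Rightarrow> ('r, 'v) state) \<Rightarrow> ('t, 'l, 'v) egraph
                 \<Rightarrow> 't \<Rightarrow> nat \<Rightarrow> nat \<times> ('r, 'v) state" where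
  "cfg P \<sigma>0 G T 0 = (0, \<sigma>0 T)"
| "cfg P \<sigma>0 G T (Suc t) =
     (let (k, \<sigma>) = cfg P \<sigma>0 G T t in
      if length (P T) \<le> k then (k, \<sigma>) else
      (case P T ! k of
         Step \<epsilon> \<delta> \<Rightarrow>
           (let e = \<epsilon> \<sigma>; v = read_val G (T, t, e) in
            (Suc k, if is_read e \<and> v = None then \<sigma> else upd \<sigma> (\<delta> \<sigma> v)))
       | Await n \<kappa> \<Rightarrow> (if \<kappa> \<sigma> then k - n else Suc k, \<sigma>)))"

definition kpc :: "('t, 'r, 'l, 'v) program \<Rightarrow> ('t \<Rightarrow> ('r, 'v) state) \<Rightarrow> ('t, 'l, 'v) egraph
                 \<Rightarrow> 't \<Rightarrow> nat \<Rightarrow> nat" where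
  "kpc P \<sigma>0 G T t = fst (cfg P \<sigma>0 G T t)"

definition sigma :: "('t, 'r, 'l, 'v) program \<Rightarrow> ('t \<Rightarrow> ('r, 'v) state) \<Rightarrow> ('t, 'l, 'v) egraph
                 \<Rightarrow> 't \<Rightarrow> nat \<Rightarrow> ('r, 'v) state" where
  "sigma P \<sigma>0 G T t = snd (cfg P \<sigma>0 G T t)"

definition evt :: "('t, 'r, 'l, 'v) program \<Rightarrow> ('t \<Rightarrow> ('r, 'v) state) \<Rightarrow> ('t, 'l, 'v) egraph
                 \<Rightarrow> 't \<Rightarrow> nat \<Rightarrow> ('l, 'v) event" where
  "evt P \<sigma>0 G T t = (case P T ! kpc P \<sigma>0 G T t of
      Step \<epsilon> _ \<Rightarrow> \<epsilon> (sigma P \<sigma>0 G T t)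
    | Await _ _ \<Rightarrow> Fn Rlx)"

definition stops :: "('t, 'r, 'l, 'v) program \<Rightarrow> ('t \<Rightarrow> ('r, 'v) state) \<Rightarrow> ('t, 'l, 'v) egraph
                 \<Rightarrow> 't \<Rightarrow> nat \<Rightarrow> bool" where
  "stops P \<sigma>0 G T t \<longleftrightarrow>
     length (P T) \<le> kpc P \<sigma>0 G T t
   \<or> (\<forall>e. (T, t, e) \<notin> Ev G)
   \<or> (\<exists>t'. t = Suc t' \<and> kpc P \<sigma>0 G T t' < length (P T)
          \<and> \<not> is_await (P T ! kpc P \<sigma>0 G T t')
          \<and> is_read (evt P \<sigma>0 G T t')
          \<and> read_val G (T, t', evt P \<sigma>0 G T t') = None)"

text \<open>t < N_G^T (N is the first stopping step; possibly infinite).\<close>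
definition running :: "('t, 'r, 'l, 'v) program \<Rightarrow> ('t \<Rightarrow> ('r, 'v) state) \<Rightarrow> ('t, 'l, 'v) egraph
                 \<Rightarrow> 't \<Rightarrow> nat \<Rightarrow> bool" where
  "running P \<sigma>0 G T t \<longleftrightarrow> (\<forall>t'\<le>t. \<not> stops P \<sigma>0 G T t')"

definition await_step :: "('t, 'r, 'l, 'v) program \<Rightarrow> ('t \<Rightarrow> ('r, 'v) state) \<Rightarrow> ('t, 'l, 'v) egraph
                 \<Rightarrow> 't \<Rightarrow> nat \<Rightarrow> bool" where
  "await_step P \<sigma>0 G T t \<longleftrightarrow> running P \<sigma>0 G T t \<and> is_await (P T ! kpc P \<sigma>0 G T t)"

text \<open>te = end_G^T(q): te is the q-th (0-based) await step.\<close>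
definition is_end :: "('t, 'r, 'l, 'v) program \<Rightarrow> ('t \<Rightarrow> ('r, 'v) state) \<Rightarrow> ('t, 'l, 'v) egraph
                 \<Rightarrow> 't \<Rightarrow> nat \<Rightarrow> nat \<Rightarrow> bool" where
  "is_end P \<sigma>0 G T q te \<longleftrightarrow> await_step P \<sigma>0 G T te
      \<and> card {t'. t' < te \<and> await_step P \<sigma>0 G T t'} = q"

definition await_index :: "('t, 'r, 'l, 'v) program \<Rightarrow> ('t \<Rightarrow> ('r, 'v) state) \<Rightarrow> ('t, 'l, 'v) egraph
                 \<Rightarrow> 't \<Rightarrow> nat \<Rightarrow> bool" where
  "await_index P \<sigma>0 G T q \<longleftrightarrow> (\<exists>te. is_end P \<sigma>0 G T q te)"

definition end_aw :: "('t, 'r, 'l, 'v) program \<Rightarrow> ('t \<Rightarrow> ('r, 'v) state) \<Rightarrow> ('t, 'l, 'v) egraph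
                 \<Rightarrow> 't \<Rightarrow> nat \<Rightarrow> nat" where
  "end_aw P \<sigma>0 G T q = (THE te. is_end P \<sigma>0 G T q te)"

definition len_aw :: "('t, 'r, 'l, 'v) program \<Rightarrow> ('t \<Rightarrow> ('r, 'v) state) \<Rightarrow> ('t, 'l, 'v) egraph
                 \<Rightarrow> 't \<Rightarrow> nat \<Rightarrow> nat" where
  "len_aw P \<sigma>0 G T q = await_len (P T ! kpc P \<sigma>0 G T (end_aw P \<sigma>0 G T q))"

definition start_aw :: "('t, 'r, 'l, 'v) program \<Rightarrow> ('t \<Rightarrow> ('r, 'v) state) \<Rightarrow> ('t, 'l, 'v) egraph
                 \<Rightarrow> 't \<Rightarrow> nat \<Rightarrow> nat" where
  "start_aw P \<sigma>0 G T q = end_aw P \<sigma>0 G T q - len_aw P \<sigma>0 G T q"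

end

theory Submission
  imports Defs
begin

text \<open>Let the await step run an await(n) at pc k.  By the syntactic restriction
  the block [k - n : k) contains no await, and no jump of the program counter lands
  in (k - n : k]: a jump from an await at pc j to j - m would start inside the
  block if j < k, would land at k - n if j = k, and would jump over the await at k
  if j > k.  So the pc one step earlier is one less, and the last n steps before
  the await step execute the block sequentially.  Only the control flow matters.\<close>

lemma wf_program_awaitD:
  assumes "wf_program P" "k < length (P T)" "P T ! k = Await n \<kappa>"
  shows "n \<le> k" and "\<And>k'. k - n \<le> k' \<Longrightarrow> k' < k \<Longrightarrow> \<not> is_await (P T ! k')"
proof -
  have "is_await (P T ! k)" "await_len (P T ! k) = n"
    using assms(3) by simp_all
  then show "n \<le> k" "\<And>k'. k - n \<le> k' \<Longrightarrow> k' < k \<Longrightarrow> \<not> is_await (P T ! k')"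
    using assms(1,2) unfolding wf_program_def by auto
qed

lemma kpc_SucE:
  obtains (halted) "length (P T) \<le> kpc P \<sigma>0 G T s" "kpc P \<sigma>0 G T (Suc s) = kpc P \<sigma>0 G T s"
  | (sequential) "kpc P \<sigma>0 G T (Suc s) = Suc (kpc P \<sigma>0 G T s)"
  | (jump) m \<kappa> where "kpc P \<sigma>0 G T s < length (P T)" "P T ! kpc P \<sigma>0 G T s = Await m \<kappa>"
      "kpc P \<sigma>0 G T (Suc s) = kpc P \<sigma>0 G T s - m"
proof -
  have "kpc P \<sigma>0 G T (Suc s) = (if length (P T) \<le> kpc P \<sigma>0 G T s then kpc P \<sigma>0 G T s else
     (case P T ! kpc P \<sigma>0 G T s of Step _ _ \<Rightarrow> Suc (kpc P \<sigma>0 G T s)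
      | Await m \<kappa> \<Rightarrow> if \<kappa> (sigma P \<sigma>0 G T s) then kpc P \<sigma>0 G T s - m else Suc (kpc P \<sigma>0 G T s)))"
    by (simp add: kpc_def sigma_def Let_def split: prod.split stmt.split)
  then show thesis
    using that by (cases "P T ! kpc P \<sigma>0 G T s") (auto split: if_splits)
qed

lemma kpc_Suc_in_await_block:
  assumes wf: "wf_program P" and k: "k < length (P T)" "P T ! k = Await n \<kappa>"
    and p: "k - n < kpc P \<sigma>0 G T (Suc s)" "kpc P \<sigma>0 G T (Suc s) \<le> k"
  shows "kpc P \<sigma>0 G T s = kpc P \<sigma>0 G T (Suc s) - 1"
proof (cases rule: kpc_SucE[of P T \<sigma>0 G s])
  case halted
  then show ?thesis using k p by linarith
next
  case sequential
  then show ?thesis by simp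
next
  case (jump m \<kappa>')
  define j where "j = kpc P \<sigma>0 G T s"
  note body = wf_program_awaitD(2)[OF wf k]
  have j: "j < length (P T)" "P T ! j = Await m \<kappa>'"
    using jump unfolding j_def by auto
  note j_body = wf_program_awaitD(2)[OF wf j]
  have land: "kpc P \<sigma>0 G T (Suc s) = j - m"
    using jump unfolding j_def by simp
  consider "j < k" | "j = k" | "k < j" by linarith
  then have False
  proof cases
    case 1
    moreover have "k - n \<le> j"
      using land p by linarith
    ultimately show False using body[of j] j(2) by simp
  next
    case 2
    then show False using j(2) k(2) land p by simp
  next
    case 3
    then show False using j_body[of k] k(2) land p by simp
  qed
  then show ?thesis ..
qed

lemma kpc_before_await:
  assumes wf: "wf_program P" and te: "kpc P \<sigma>0 G T te = k"
    and k: "k < length (P T)" "P T ! k = Await n \<kappa>"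
  shows "d \<le> n \<Longrightarrow> d \<le> te \<Longrightarrow> kpc P \<sigma>0 G T (te - d) = k - d"
proof (induction d)
  case 0
  then show ?case using te by simp
next
  case (Suc d)
  have "Suc (te - Suc d) = te - d"
    using Suc.prems by simp
  then have "kpc P \<sigma>0 G T (Suc (te - Suc d)) = k - d"
    using Suc by simp
  with kpc_Suc_in_await_block[OF wf k, where s = "te - Suc d"] Suc.prems
    wf_program_awaitD(1)[OF wf k] show ?case
    by simp
qed

lemma card_await_steps_before_less:
  assumes "await_step P \<sigma>0 G T a" "a < b"
  shows "card {t'. t' < a \<and> await_step P \<sigma>0 G T t'} < card {t'. t' < b \<and> await_step P \<sigma>0 G T t'}"
  by (rule psubset_card_mono) (use assms in auto)

lemma end_aw_eq:
  assumes "is_end P \<sigma>0 G T q te"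
  shows "end_aw P \<sigma>0 G T q = te"
  unfolding end_aw_def
proof (rule the_equality)
  fix te'
  assume "is_end P \<sigma>0 G T q te'"
  with assms show "te' = te"
    unfolding is_end_def
    using card_await_steps_before_less[of P \<sigma>0 G T te te']
      card_await_steps_before_less[of P \<sigma>0 G T te' te]
    by (cases te te' rule: linorder_cases) auto
qed (fact assms)

theorem lemma2:
  fixes P :: "('t::finite, 'r::finite, 'l::finite, 'v::finite) program"
    and \<sigma>0 :: "'t \<Rightarrow> ('r, 'v) state"
    and G :: "('t, 'l, 'v) egraph"
    and T :: 't and q t :: nat
  assumes "wf_program P"
    and "wf_graph G"
    and "await_index P \<sigma>0 G T q"
    and "start_aw P \<sigma>0 G T q \<le> t"
    and "t < end_aw P \<sigma>0 G T q"
  shows "\<not> is_await (P T ! kpc P \<sigma>0 G T t)"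
proof -
  obtain te where te: "is_end P \<sigma>0 G T q te"
    using assms(3) unfolding await_index_def by blast
  define k where "k = kpc P \<sigma>0 G T te"
  have k_lt: "k < length (P T)" and "is_await (P T ! k)"
    using te unfolding k_def is_end_def await_step_def running_def stops_def by auto
  then obtain n \<kappa> where k_await: "P T ! k = Await n \<kappa>"
    by (cases "P T ! k") auto
  have t_range: "te - n \<le> t" "t < te"
    using assms(4,5) unfolding start_aw_def len_aw_def end_aw_eq[OF te] k_def[symmetric] k_await
    by simp_all
  then have "kpc P \<sigma>0 G T t = k - (te - t)"
    using kpc_before_await[OF assms(1) k_def[symmetric] k_lt k_await, of "te - t"] by simp
  moreover have "n \<le> k"
    using wf_program_awaitD(1)[OF assms(1) k_lt k_await] .
  ultimately have "k - n \<le> kpc P \<sigma>0 G T t" "kpc P \<sigma>0 G T t < k"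
    using t_range by linarith+
  then show ?thesis
    using wf_program_awaitD(2)[OF assms(1) k_lt k_await] by blast
qed

end
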